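(* Let $(X_0,p_0)$, $(X_1,p_1)$, $(Y,d)$ be metric spaces and let $f: X_0 \to X_1$ be a function such that $f[X_0]$ is closed in $X_1$ and $f: X_0 \to f[X_0]$ is a homeomorphism. Let $F: X_0 \Rightarrow Y$ be a multi-valued function and define $\tilde F: X_1 \Rightarrow Y$ by $\tilde F(x_1) = F(x_0)$ if $x_1 = f(x_0)$ for some $x_0 \in X_0$, and $\tilde F(x_1) = Y$ otherwise. Let $P_0\subseteq X_0$ and $P_1\subseteq X_1$ be the sets of points of continuity of $F$ and $\tilde F$ respectively. Then: (1) $\tilde F$ is continuous at $x_1$ if and only if either $x_1 \notin f[X_0]$, or $x_1 = f(x_0)$ with $F$ continuous at $x_0$; hence $P_1 = f[P_0] \cup (X_1 \setminus f[X_0])$. (2) If $\Gamma$ is any of the classes $\Sigma^0_n$, $\Pi^0_n$ with $n \geq 2$, or $\Delta^1_1$ (the latter when $X_0,X_1,Y$ are complete separable metric spaces), then $P_1 \in \Gamma(X_1)$ if and only if $P_0 \in \Gamma(X_0)$; in particular if $P_0$ is not $\Pi^0_3$ (resp. not Borel) then $P_1$ is not $\Pi^0_3$ (resp. not Borel). Moreover, viewing $F$ and $\tilde F$ as subsets of $X_0\times Y$ and $X_1 \times Y$ respectively, $F \in \Gamma(X_0\times Y)$ if and only if $\tilde F \in \Gamma(X_1\times Y)$. (3) If $F(x_0)$ is closed in $Y$ for every $x_0 \in X_0$, then $\tilde F(x_1)$ is closed in $Y$ for every $x_1 \in X_1$.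
   Context: A multi-valued function $F: X \Rightarrow Y$ assigns to each $x$ a nonempty set $F(x)\subseteq Y$ and is identified with its graph $\{(x,y): y\in F(x)\}\subseteq X\times Y$. $F$ is continuous at $x$ if there is some $y \in F(x)$ such that for every $\varepsilon>0$ there is $\delta>0$ such that for every $x' \in B_p(x,\delta)$ there is $y' \in F(x')$ with $d(y,y')<\varepsilon$. Borel hierarchy: $\Sigma^0_1$ = open; $\Sigma^0_{n+1}$ = countable unions of sets whose complements are $\Sigma^0_k$ for some $k\le n$; $\Pi^0_n$ = complements of $\Sigma^0_n$ sets. For complete separable metric spaces, $\Delta^1_1$ denotes the sets that are both analytic (continuous images of closed subsets of complete separable metric spaces) and co-analytic; these are exactly the Borel sets. *)

theory Defs
  imports "HOL-Analysis.Analysis"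
begin

text \<open>A multi-valued function \<open>F : X \<Rightarrow> Y\<close> is represented as \<open>F :: 'a \<Rightarrow> 'c set\<close>
  (nonemptiness of values is assumed separately); its graph:\<close>
definition mv_graph :: "('a \<Rightarrow> 'c set) \<Rightarrow> ('a \<times> 'c) set" where
  "mv_graph F = {(x, y). y \<in> F x}"

definition mv_continuous_at :: "('a::metric_space \<Rightarrow> 'c::metric_space set) \<Rightarrow> 'a \<Rightarrow> bool" where
  "mv_continuous_at F x \<longleftrightarrow>
     (\<exists>y\<in>F x. \<forall>e>0. \<exists>\<delta>>0. \<forall>x'\<in>ball x \<delta>. \<exists>y'\<in>F x'. dist y y' < e)"

definition mv_cont_points :: "('a::metric_space \<Rightarrow> 'c::metric_space set) \<Rightarrow> 'a set" where
  "mv_cont_points F = {x. mv_continuous_at F x}"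

definition mv_extend :: "('a \<Rightarrow> 'b) \<Rightarrow> ('a \<Rightarrow> 'c set) \<Rightarrow> 'b \<Rightarrow> 'c set" where
  "mv_extend f F x1 = (if x1 \<in> range f then F (inv f x1) else UNIV)"

text \<open>Borel hierarchy. \<open>sigma_pi_aux n\<close> = (\<Sigma>^0_{n+1}, \<Union>_{k\<le>n+1} \<Pi>^0_k).\<close>
primrec sigma_pi_aux :: "nat \<Rightarrow> ('a::topological_space set set \<times> 'a set set)" where
  "sigma_pi_aux 0 = ({S. open S}, {S. closed S})"
| "sigma_pi_aux (Suc n) =
     (let S' = {\<Union>\<A> | \<A>. countable \<A> \<and> \<A> \<subseteq> snd (sigma_pi_aux n)}
      in (S', snd (sigma_pi_aux n) \<union> uminus ` S'))"

text \<open>\<open>Sigma0 n\<close> is \<Sigma>^0_n for \<open>n \<ge> 1\<close> (and empty for \<open>n = 0\<close>); \<open>Pi0 n\<close> = complements.\<close>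
definition Sigma0 :: "nat \<Rightarrow> 'a::topological_space set set" where
  "Sigma0 n = (if n = 0 then {} else fst (sigma_pi_aux (n - 1)))"

definition Pi0 :: "nat \<Rightarrow> 'a::topological_space set set" where
  "Pi0 n = uminus ` Sigma0 n"

definition complete_separable :: "'a::metric_space itself \<Rightarrow> bool" where
  "complete_separable _ \<longleftrightarrow> complete (UNIV :: 'a set) \<and> separable_space (euclidean :: 'a topology)"

end

theory Submission
  imports Defs
begin

(* Let C = X1 - f[X0], an open set. The continuity points of the extension are f[P0] union C:
   outside f[X0] the extension is Y on the open neighbourhood C, and at f x0 continuity is
   carried back and forth by f and by its inverse, which is continuous on f[X0]. Likewise the
   graph of the extension is (f x id)[F] union (C x Y), and f x id is again a closed embedding.
   So everything reduces to: for a closed embedding h with inverse g, a set A belongs to a class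
   Gamma iff h[A] union (complement of the range of h) does. One direction is the preimage under h;
   for the other, pick B in Gamma with B and g^-1[A] having the same trace on the range of h,
   and add the open complement of the range. Sigma^0_n (n >= 1), Pi^0_n (n >= 2) and the Borel
   sets are closed under these operations. *)

section \<open>The finite levels of the Borel hierarchy in metric spaces\<close>

lemma sigma_pi_aux_Suc:
  "fst (sigma_pi_aux (Suc n)) = {\<Union>\<A> |\<A>. countable \<A> \<and> \<A> \<subseteq> snd (sigma_pi_aux n)}"
  "snd (sigma_pi_aux (Suc n)) = snd (sigma_pi_aux n) \<union> uminus ` fst (sigma_pi_aux (Suc n))"
  by (simp_all add: Let_def)

declare sigma_pi_aux.simps(2) [simp del]

lemma fst_sigma_pi_aux_SucI:
  "countable \<A> \<Longrightarrow> \<A> \<subseteq> snd (sigma_pi_aux n) \<Longrightarrow> \<Union>\<A> \<in> fst (sigma_pi_aux (Suc n))"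
  unfolding sigma_pi_aux_Suc(1) by blast

lemma uminus_image_iff: "A \<in> uminus ` \<S> \<longleftrightarrow> - A \<in> (\<S> :: 'a set set)"
  by (metis double_compl image_iff)

lemma open_eq_countable_Union_closed:
  fixes U :: "'a::metric_space set"
  assumes "open U"
  obtains \<A> where "countable \<A>" "\<A> \<subseteq> Collect closed" "\<Union>\<A> = U"
proof -
  have "fsigma_in euclidean U"
    using assms by (simp add: open_imp_fsigma_in metrizable_space_euclidean)
  then obtain \<A> where "countable \<A>" "\<A> \<subseteq> Collect (closedin euclidean)" "\<Union>\<A> = U"
    unfolding fsigma_in_def union_of_def by blast
  then show ?thesis
    using that closed_closedin by blast
qed

lemma fst_sigma_pi_aux_mono_Suc:
  "fst (sigma_pi_aux n) \<subseteq> (fst (sigma_pi_aux (Suc n)) :: 'a::metric_space set set)"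
proof
  fix U :: "'a set"
  assume U: "U \<in> fst (sigma_pi_aux n)"
  show "U \<in> fst (sigma_pi_aux (Suc n))"
  proof (cases n)
    case 0
    then have "open U"
      using U by simp
    then obtain \<A> where "countable \<A>" "\<A> \<subseteq> Collect closed" "\<Union>\<A> = U"
      by (rule open_eq_countable_Union_closed)
    then show ?thesis
      using 0 fst_sigma_pi_aux_SucI[of \<A> 0] by simp
  next
    case (Suc m)
    then obtain \<A> where "countable \<A>" "\<A> \<subseteq> snd (sigma_pi_aux m)" "U = \<Union>\<A>"
      using U unfolding Suc sigma_pi_aux_Suc(1) by blast
    moreover have "snd (sigma_pi_aux m) \<subseteq> (snd (sigma_pi_aux n) :: 'a set set)"
      unfolding Suc sigma_pi_aux_Suc(2)[of m] by (rule Un_upper1)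
    ultimately show ?thesis
      using fst_sigma_pi_aux_SucI[of \<A> n] by blast
  qed
qed

text \<open>The second component of \<open>sigma_pi_aux n\<close> collects all \<open>\<Pi>\<^sup>0\<^sub>k\<close> with \<open>k \<le> n + 1\<close>; since open sets
  are \<open>F\<^sub>\<sigma>\<close> in a metric space, the hierarchy increases and this union is just \<open>Pi0 (n + 1)\<close>.\<close>

lemma snd_sigma_pi_aux:
  "snd (sigma_pi_aux n) = uminus ` (fst (sigma_pi_aux n) :: 'a::metric_space set set)"
proof (induction n)
  case 0
  show ?case
    by (rule set_eqI) (simp add: uminus_image_iff closed_def)
next
  case (Suc n)
  have "snd (sigma_pi_aux (Suc n)) =
      uminus ` fst (sigma_pi_aux n) \<union> uminus ` (fst (sigma_pi_aux (Suc n)) :: 'a set set)"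
    using Suc.IH by (simp only: sigma_pi_aux_Suc(2))
  also have "\<dots> = uminus ` fst (sigma_pi_aux (Suc n))"
    by (rule Un_absorb1[OF image_mono[OF fst_sigma_pi_aux_mono_Suc]])
  finally show ?case .
qed

lemma Sigma0_0 [simp]: "Sigma0 0 = {}"
  by (simp add: Sigma0_def)

lemma Sigma0_Suc_0 [simp]: "Sigma0 (Suc 0) = Collect open"
  by (simp add: Sigma0_def)

lemma Pi0_iff: "A \<in> Pi0 n \<longleftrightarrow> - A \<in> Sigma0 n"
  by (simp add: Pi0_def uminus_image_iff)

lemma Sigma0_Suc_Suc:
  "Sigma0 (Suc (Suc n)) = {\<Union>\<A> |\<A>. countable \<A> \<and> \<A> \<subseteq> (Pi0 (Suc n) :: 'a::metric_space set set)}"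
proof -
  have "Sigma0 (Suc (Suc n)) = (fst (sigma_pi_aux (Suc n)) :: 'a set set)"
    "Pi0 (Suc n) = uminus ` (fst (sigma_pi_aux n) :: 'a set set)"
    by (simp_all add: Sigma0_def Pi0_def)
  then show ?thesis
    by (simp only: sigma_pi_aux_Suc(1) snd_sigma_pi_aux)
qed

lemma Sigma0_Suc_SucI:
  fixes \<A> :: "'a::metric_space set set"
  shows "countable \<A> \<Longrightarrow> \<A> \<subseteq> Pi0 (Suc n) \<Longrightarrow> \<Union>\<A> \<in> Sigma0 (Suc (Suc n))"
  unfolding Sigma0_Suc_Suc by blast

lemma Sigma0_Suc_SucE:
  fixes U :: "'a::metric_space set"
  assumes "U \<in> Sigma0 (Suc (Suc n))"
  obtains \<A> where "countable \<A>" "\<A> \<subseteq> Pi0 (Suc n)" "U = \<Union>\<A>"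
  using assms unfolding Sigma0_Suc_Suc by blast

lemma Sigma0_mono: "m \<le> n \<Longrightarrow> Sigma0 m \<subseteq> (Sigma0 n :: 'a::metric_space set set)"
proof (rule lift_Suc_mono_le)
  fix k
  show "Sigma0 k \<subseteq> (Sigma0 (Suc k) :: 'a set set)"
    by (cases k) (simp_all add: Sigma0_def fst_sigma_pi_aux_mono_Suc)
qed

lemma Pi0_subset_Sigma0_Suc: "Pi0 n \<subseteq> (Sigma0 (Suc n) :: 'a::metric_space set set)"
proof
  fix A :: "'a set"
  assume A: "A \<in> Pi0 n"
  then obtain m where "n = Suc m"
    by (cases n) (simp_all add: Pi0_def)
  then show "A \<in> Sigma0 (Suc n)"
    using Sigma0_Suc_SucI[of "{A}" m] A by simp
qed

lemma open_Sigma0: "open U \<Longrightarrow> 1 \<le> n \<Longrightarrow> U \<in> (Sigma0 n :: 'a::metric_space set set)"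
  using Sigma0_mono[of "Suc 0" n] by auto

lemma open_Pi0:
  fixes U :: "'a::metric_space set"
  assumes "open U" "2 \<le> n"
  shows "U \<in> Pi0 n"
proof -
  have "- U \<in> Pi0 (Suc 0)"
    using assms(1) by (simp add: Pi0_iff)
  then have "- U \<in> Sigma0 2"
    using Pi0_subset_Sigma0_Suc[of "Suc 0"] by (auto simp: numeral_2_eq_2)
  then show ?thesis
    using Sigma0_mono[OF assms(2)] by (auto simp: Pi0_iff)
qed

lemma Sigma0_Un:
  fixes A B :: "'a::metric_space set"
  assumes A: "A \<in> Sigma0 n" and B: "B \<in> Sigma0 n"
  shows "A \<union> B \<in> Sigma0 n"
proof -
  consider "n = Suc 0" | m where "n = Suc (Suc m)"
    using A by (metis Sigma0_0 empty_iff not0_implies_Suc)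
  then show ?thesis
  proof cases
    case 1
    then show ?thesis
      using A B by (simp add: open_Un)
  next
    case 2
    obtain \<A> \<B> where "countable \<A>" "\<A> \<subseteq> Pi0 (Suc m)" "A = \<Union>\<A>"
      "countable \<B>" "\<B> \<subseteq> Pi0 (Suc m)" "B = \<Union>\<B>"
      using A B unfolding 2 by (metis Sigma0_Suc_SucE)
    then show ?thesis
      unfolding 2 using Sigma0_Suc_SucI[of "\<A> \<union> \<B>" m] by simp
  qed
qed

lemma Pi0_Int: "A \<in> Pi0 n \<Longrightarrow> B \<in> Pi0 n \<Longrightarrow> A \<inter> B \<in> (Pi0 n :: 'a::metric_space set set)"
  using Sigma0_Un[of "- A" n "- B"] by (simp add: Pi0_iff)

lemma Sigma0_Int:
  fixes A B :: "'a::metric_space set"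
  assumes A: "A \<in> Sigma0 n" and B: "B \<in> Sigma0 n"
  shows "A \<inter> B \<in> Sigma0 n"
proof -
  consider "n = Suc 0" | m where "n = Suc (Suc m)"
    using A by (metis Sigma0_0 empty_iff not0_implies_Suc)
  then show ?thesis
  proof cases
    case 1
    then show ?thesis
      using A B by (simp add: open_Int)
  next
    case 2
    obtain \<A> \<B> where \<A>: "countable \<A>" "\<A> \<subseteq> Pi0 (Suc m)" "A = \<Union>\<A>"
      and \<B>: "countable \<B>" "\<B> \<subseteq> Pi0 (Suc m)" "B = \<Union>\<B>"
      using A B unfolding 2 by (metis Sigma0_Suc_SucE)
    define \<C> where "\<C> = (\<lambda>(a, b). a \<inter> b) ` (\<A> \<times> \<B>)"
    have "countable \<C>"
      using \<A> \<B> by (simp add: \<C>_def)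
    moreover have "\<C> \<subseteq> Pi0 (Suc m)"
      using \<A> \<B> by (auto simp: \<C>_def intro: Pi0_Int)
    moreover have "A \<inter> B = \<Union>\<C>"
      using \<A> \<B> by (auto simp: \<C>_def)
    ultimately show ?thesis
      unfolding 2 using Sigma0_Suc_SucI by metis
  qed
qed

lemma Pi0_Un: "A \<in> Pi0 n \<Longrightarrow> B \<in> Pi0 n \<Longrightarrow> A \<union> B \<in> (Pi0 n :: 'a::metric_space set set)"
  using Sigma0_Int[of "- A" n "- B"] by (simp add: Pi0_iff)

section \<open>Classes transported along closed embeddings\<close>

lemma Sigma0_vimage_relative:
  fixes g :: "'a::metric_space \<Rightarrow> 'b::metric_space"
  assumes g: "continuous_on C g"
  shows "A \<in> Sigma0 n \<Longrightarrow> \<exists>B\<in>Sigma0 n. B \<inter> C = g -` A \<inter> C"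
proof (induction n arbitrary: A)
  case 0
  then show ?case
    by simp
next
  case (Suc n)
  show ?case
  proof (cases n)
    case 0
    then show ?thesis
      using Suc.prems g by (simp add: continuous_on_open_invariant)
  next
    case (Suc m)
    obtain \<A> where \<A>: "countable \<A>" "\<A> \<subseteq> Pi0 (Suc m)" "A = \<Union>\<A>"
      using Suc.prems unfolding Suc by (rule Sigma0_Suc_SucE)
    have "\<exists>b\<in>Pi0 (Suc m). b \<inter> C = g -` a \<inter> C" if "a \<in> \<A>" for a
    proof -
      have "- a \<in> Sigma0 n"
        using \<A>(2) that Suc by (auto simp: Pi0_iff)
      then obtain b where "b \<in> Sigma0 n" "b \<inter> C = g -` (- a) \<inter> C"
        using Suc.IH by blast
      then show ?thesis
        using Suc by (intro bexI[of _ "- b"]) (auto simp: Pi0_iff)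
    qed
    then obtain \<phi> where \<phi>: "\<And>a. a \<in> \<A> \<Longrightarrow> \<phi> a \<in> Pi0 (Suc m) \<and> \<phi> a \<inter> C = g -` a \<inter> C"
      by metis
    have "\<Union>(\<phi> ` \<A>) \<in> Sigma0 (Suc n)"
      unfolding Suc using \<A>(1) \<phi> by (intro Sigma0_Suc_SucI) auto
    moreover have "\<Union>(\<phi> ` \<A>) \<inter> C = g -` A \<inter> C"
      using \<phi> \<A>(3) by blast
    ultimately show ?thesis
      by blast
  qed
qed

lemma Pi0_vimage_relative:
  fixes g :: "'a::metric_space \<Rightarrow> 'b::metric_space"
  assumes "continuous_on C g" "A \<in> Pi0 n"
  shows "\<exists>B\<in>Pi0 n. B \<inter> C = g -` A \<inter> C"
proof -
  have "- A \<in> Sigma0 n"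
    using assms(2) by (simp add: Pi0_iff)
  then obtain B where "B \<in> Sigma0 n" "B \<inter> C = g -` (- A) \<inter> C"
    using Sigma0_vimage_relative[OF assms(1)] by blast
  moreover have "- B \<in> Pi0 n"
    using \<open>B \<in> Sigma0 n\<close> by (simp add: Pi0_iff)
  moreover have "- B \<inter> C = g -` A \<inter> C"
    using \<open>B \<inter> C = g -` (- A) \<inter> C\<close> by auto
  ultimately show ?thesis
    by blast
qed

lemma borel_vimage_relative:
  assumes "continuous_on C g" "A \<in> sets borel"
  shows "\<exists>B\<in>sets borel. B \<inter> C = g -` A \<inter> C"
proof -
  have "g -` A \<inter> space (restrict_space borel C) \<in> sets (restrict_space borel C)"
    using measurable_sets[OF borel_measurable_continuous_on_restrict[OF assms(1)] assms(2)] .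
  then obtain B where "B \<in> sets borel" "g -` A \<inter> C = C \<inter> B"
    by (auto simp: sets_restrict_space space_restrict_space)
  then show ?thesis
    by blast
qed

lemma image_Un_compl_range_iff:
  assumes gh: "\<And>x. g (h x) = x"
    and vimage: "\<And>B. B \<in> \<T> \<Longrightarrow> h -` B \<in> \<S>"
    and relative: "\<And>A. A \<in> \<S> \<Longrightarrow> \<exists>B\<in>\<T>. B \<inter> range h = g -` A \<inter> range h"
    and Un_compl_range: "\<And>B. B \<in> \<T> \<Longrightarrow> B \<union> - range h \<in> \<T>"
  shows "h ` A \<union> - range h \<in> \<T> \<longleftrightarrow> A \<in> \<S>"
proof
  assume "h ` A \<union> - range h \<in> \<T>"
  moreover have "h -` (h ` A \<union> - range h) = A"
    using gh by (auto simp: image_iff) (metis)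
  ultimately show "A \<in> \<S>"
    using vimage by metis
next
  assume "A \<in> \<S>"
  then obtain B where "B \<in> \<T>" "B \<inter> range h = g -` A \<inter> range h"
    using relative by blast
  moreover have "g -` A \<inter> range h = h ` A"
    using gh by auto
  ultimately have "h ` A \<union> - range h = B \<union> - range h"
    by blast
  then show "h ` A \<union> - range h \<in> \<T>"
    using Un_compl_range \<open>B \<in> \<T>\<close> by simp
qed

lemma closed_embedding_image_Un_compl_iff:
  fixes h :: "'a::metric_space \<Rightarrow> 'b::metric_space"
  assumes hom: "homeomorphism UNIV (range h) h g" and closed: "closed (range h)"
  shows "1 \<le> n \<Longrightarrow> h ` A \<union> - range h \<in> Sigma0 n \<longleftrightarrow> A \<in> Sigma0 n"
    and "2 \<le> n \<Longrightarrow> h ` A \<union> - range h \<in> Pi0 n \<longleftrightarrow> A \<in> Pi0 n"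
    and "h ` A \<union> - range h \<in> sets borel \<longleftrightarrow> A \<in> sets borel"
proof -
  have gh: "\<And>x. g (h x) = x" and h: "continuous_on UNIV h" and g: "continuous_on (range h) g"
    using hom by (simp_all add: homeomorphism_def)
  have "open (- range h)"
    using closed by (simp add: open_Compl)
  show "h ` A \<union> - range h \<in> Sigma0 n \<longleftrightarrow> A \<in> Sigma0 n" if "1 \<le> n"
  proof (rule image_Un_compl_range_iff[where g = g])
    show "g (h x) = x" for x
      by (rule gh)
    show "h -` B \<in> Sigma0 n" if "B \<in> Sigma0 n" for B
      using Sigma0_vimage_relative[OF h that] by simp
    show "B \<union> - range h \<in> Sigma0 n" if "B \<in> Sigma0 n" for B
      using Sigma0_Un[OF that open_Sigma0] \<open>open (- range h)\<close> \<open>1 \<le> n\<close> by blast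
  qed (rule Sigma0_vimage_relative[OF g])
  show "h ` A \<union> - range h \<in> Pi0 n \<longleftrightarrow> A \<in> Pi0 n" if "2 \<le> n"
  proof (rule image_Un_compl_range_iff[where g = g])
    show "g (h x) = x" for x
      by (rule gh)
    show "h -` B \<in> Pi0 n" if "B \<in> Pi0 n" for B
      using Pi0_vimage_relative[OF h that] by simp
    show "B \<union> - range h \<in> Pi0 n" if "B \<in> Pi0 n" for B
      using Pi0_Un[OF that open_Pi0] \<open>open (- range h)\<close> \<open>2 \<le> n\<close> by blast
  qed (rule Pi0_vimage_relative[OF g])
  show "h ` A \<union> - range h \<in> sets borel \<longleftrightarrow> A \<in> sets borel"
  proof (rule image_Un_compl_range_iff[where g = g])
    show "g (h x) = x" for x
      by (rule gh)
    show "h -` B \<in> sets borel" if "B \<in> sets borel" for B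
      using borel_vimage_relative[OF h that] by simp
    show "B \<union> - range h \<in> sets borel" if "B \<in> sets borel" for B
      using that borel_open[OF \<open>open (- range h)\<close>] by (rule sets.Un)
  qed (rule borel_vimage_relative[OF g])
qed

lemma homeomorphism_map_prod:
  assumes "homeomorphism S T f g" "homeomorphism S' T' f' g'"
  shows "homeomorphism (S \<times> S') (T \<times> T') (map_prod f f') (map_prod g g')"
proof -
  have cont: "continuous_on (A \<times> A') (map_prod \<phi> \<phi>')"
    if "continuous_on A \<phi>" "continuous_on A' \<phi>'" for A A' \<phi> \<phi>'
    unfolding map_prod_def case_prod_beta
    by (intro continuous_on_Pair continuous_on_compose2[OF that(1) continuous_on_fst]
        continuous_on_compose2[OF that(2) continuous_on_snd]) auto
  show ?thesis
    using assms by (auto simp: homeomorphism_def map_prod_surj_on intro!: cont)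
qed

section \<open>Extending a multi-valued function along a closed embedding\<close>

lemma mv_extend_apply [simp]: "inj f \<Longrightarrow> mv_extend f F (f x) = F x"
  by (simp add: mv_extend_def)

lemma mv_extend_outside [simp]: "x \<notin> range f \<Longrightarrow> mv_extend f F x = UNIV"
  by (simp add: mv_extend_def)

lemma mv_continuous_at_pullback:
  fixes \<phi> :: "'a::metric_space \<Rightarrow> 'b::metric_space" and F :: "'b \<Rightarrow> 'c::metric_space set"
  assumes \<phi>: "continuous (at x within S) \<phi>" and "x \<in> S" and F: "mv_continuous_at F (\<phi> x)"
    and inside: "\<And>z. z \<in> S \<Longrightarrow> F (\<phi> z) \<subseteq> G z"
    and outside: "\<And>z. z \<notin> S \<Longrightarrow> G z = UNIV"
  shows "mv_continuous_at G x"
proof -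
  obtain y where y: "y \<in> F (\<phi> x)"
    and near: "\<And>e. e > 0 \<Longrightarrow> \<exists>d>0. \<forall>x'\<in>ball (\<phi> x) d. \<exists>y'\<in>F x'. dist y y' < e"
    using F unfolding mv_continuous_at_def by blast
  have "\<exists>d>0. \<forall>z\<in>ball x d. \<exists>y'\<in>G z. dist y y' < e" if e: "e > 0" for e
  proof -
    obtain d where "d > 0" and d: "\<And>x'. x' \<in> ball (\<phi> x) d \<Longrightarrow> \<exists>y'\<in>F x'. dist y y' < e"
      using near[OF e] by blast
    obtain d' where "d' > 0" and d': "\<And>z. z \<in> S \<Longrightarrow> dist z x < d' \<Longrightarrow> dist (\<phi> z) (\<phi> x) < d"
      using \<phi> \<open>d > 0\<close> unfolding continuous_within_eps_delta by blast
    have "\<exists>y'\<in>G z. dist y y' < e" if "z \<in> ball x d'" for z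
    proof (cases "z \<in> S")
      case True
      then have "\<phi> z \<in> ball (\<phi> x) d"
        using d'[OF True] that by (simp add: dist_commute)
      then show ?thesis
        using d inside[OF True] by blast
    next
      case False
      then show ?thesis
        using outside[OF False] e by (intro bexI[of _ y]) simp_all
    qed
    then show ?thesis
      using \<open>d' > 0\<close> by blast
  qed
  moreover have "y \<in> G x"
    using inside[OF \<open>x \<in> S\<close>] y by blast
  ultimately show ?thesis
    unfolding mv_continuous_at_def by blast
qed

lemma mv_continuous_at_if_UNIV_near:
  assumes "open U" "x \<in> U" "\<And>z. z \<in> U \<Longrightarrow> G z = UNIV"
  shows "mv_continuous_at G x"
proof -
  obtain r where "r > 0" "ball x r \<subseteq> U"
    using assms(1,2) open_contains_ball by blast
  then have "\<forall>e>0. \<exists>d>0. \<forall>z\<in>ball x d. \<exists>y'\<in>G z. dist undefined y' < e"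
    using assms(3) by (metis UNIV_I dist_self subsetD)
  then show ?thesis
    unfolding mv_continuous_at_def using assms(2,3) by blast
qed

lemma mv_continuous_at_extend_iff:
  fixes f :: "'a::metric_space \<Rightarrow> 'b::metric_space" and F :: "'a \<Rightarrow> 'c::metric_space set"
  assumes hom: "homeomorphism UNIV (range f) f g" and closed: "closed (range f)"
  shows "mv_continuous_at (mv_extend f F) x1 \<longleftrightarrow>
    x1 \<notin> range f \<or> (\<exists>x0. x1 = f x0 \<and> mv_continuous_at F x0)"
proof (cases "x1 \<in> range f")
  case False
  have "mv_continuous_at (mv_extend f F) x1"
    by (rule mv_continuous_at_if_UNIV_near[of "- range f"]) (use closed False in auto)
  then show ?thesis
    using False by blast
next
  case True
  then obtain x0 where x0: "x1 = f x0"
    by blast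
  have gf: "\<And>x. g (f x) = x" and "inj f"
    and f: "continuous_on UNIV f" and g: "continuous_on (range f) g"
    using hom by (auto simp: homeomorphism_def intro: inj_on_inverseI)
  have "mv_continuous_at (mv_extend f F) (f x0) \<longleftrightarrow> mv_continuous_at F x0"
  proof
    assume "mv_continuous_at (mv_extend f F) (f x0)"
    then show "mv_continuous_at F x0"
      using f \<open>inj f\<close>
      by (intro mv_continuous_at_pullback[where \<phi> = f and S = UNIV and F = "mv_extend f F"])
        (auto simp: continuous_on_eq_continuous_within)
  next
    assume "mv_continuous_at F x0"
    then show "mv_continuous_at (mv_extend f F) (f x0)"
      using g gf \<open>inj f\<close>
      by (intro mv_continuous_at_pullback[where \<phi> = g and S = "range f" and F = F])
        (auto simp: continuous_on_eq_continuous_within)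
  qed
  then show ?thesis
    using x0 \<open>inj f\<close> by (auto dest: injD)
qed

lemma mv_cont_points_extend:
  fixes f :: "'a::metric_space \<Rightarrow> 'b::metric_space" and F :: "'a \<Rightarrow> 'c::metric_space set"
  assumes "homeomorphism UNIV (range f) f g" "closed (range f)"
  shows "mv_cont_points (mv_extend f F) = f ` mv_cont_points F \<union> - range f"
  using mv_continuous_at_extend_iff[OF assms] by (auto simp: mv_cont_points_def)

lemma mv_graph_extend:
  assumes "inj f"
  shows "mv_graph (mv_extend f F) = map_prod f id ` mv_graph F \<union> - range (map_prod f id)"
proof (rule set_eqI)
  fix p :: "'b \<times> 'c"
  obtain a b where p: "p = (a, b)"
    by fastforce
  show "p \<in> mv_graph (mv_extend f F) \<longleftrightarrow> p \<in> map_prod f id ` mv_graph F \<union> - range (map_prod f id)"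
  proof (cases "a \<in> range f")
    case True
    then obtain x where "a = f x"
      by blast
    moreover have "p \<in> range (map_prod f id)"
      using \<open>a = f x\<close> rangeI[of "map_prod f id" "(x, b)"] by (simp add: p)
    ultimately show ?thesis
      using assms by (auto simp: p mv_graph_def inj_eq)
  next
    case False
    then show ?thesis
      by (auto simp: p mv_graph_def)
  qed
qed

theorem lemma2p3:
  fixes f :: "'a::metric_space \<Rightarrow> 'b::metric_space"
    and F :: "'a \<Rightarrow> 'c::metric_space set"
  assumes f_closed: "closed (range f)"
    and f_homeo: "\<exists>g. homeomorphism UNIV (range f) f g"
    and F_nonempty: "\<And>x. F x \<noteq> {}"
  shows
    \<comment> \<open>(1)\<close>
    "(\<forall>x1. mv_continuous_at (mv_extend f F) x1 \<longleftrightarrow>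
        (x1 \<notin> range f \<or> (\<exists>x0. x1 = f x0 \<and> mv_continuous_at F x0)))
     \<and> mv_cont_points (mv_extend f F) = f ` mv_cont_points F \<union> (UNIV - range f)
    \<comment> \<open>(2) for \<Sigma>^0_n, \<Pi>^0_n, n \<ge> 2\<close>
     \<and> (\<forall>n\<ge>2.
          (mv_cont_points (mv_extend f F) \<in> Sigma0 n \<longleftrightarrow> mv_cont_points F \<in> Sigma0 n)
        \<and> (mv_cont_points (mv_extend f F) \<in> Pi0 n \<longleftrightarrow> mv_cont_points F \<in> Pi0 n)
        \<and> (mv_graph F \<in> Sigma0 n \<longleftrightarrow> mv_graph (mv_extend f F) \<in> Sigma0 n)
        \<and> (mv_graph F \<in> Pi0 n \<longleftrightarrow> mv_graph (mv_extend f F) \<in> Pi0 n))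
    \<comment> \<open>(2) for \<Delta>^1_1 = Borel, in complete separable metric spaces\<close>
     \<and> ((complete_separable TYPE('a) \<and> complete_separable TYPE('b) \<and> complete_separable TYPE('c)) \<longrightarrow>
          (mv_cont_points (mv_extend f F) \<in> sets borel \<longleftrightarrow> mv_cont_points F \<in> sets borel)
        \<and> (mv_graph F \<in> sets borel \<longleftrightarrow> mv_graph (mv_extend f F) \<in> sets borel))
    \<comment> \<open>(3)\<close>
     \<and> ((\<forall>x0. closed (F x0)) \<longrightarrow> (\<forall>x1. closed (mv_extend f F x1)))"
proof -
  obtain g where hom: "homeomorphism UNIV (range f) f g"
    using f_homeo by blast
  then have "inj f"
    by (auto simp: homeomorphism_def intro: inj_on_inverseI)
  have range_graph: "range (map_prod f (id :: 'c \<Rightarrow> 'c)) = range f \<times> UNIV"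
    by (simp add: map_prod_surj_on flip: UNIV_Times_UNIV)
  have hom_graph:
    "homeomorphism UNIV (range (map_prod f id)) (map_prod f id) (map_prod g (id :: 'c \<Rightarrow> 'c))"
    using homeomorphism_map_prod[OF hom homeomorphism_ident[of UNIV, folded id_def]]
    by (simp add: range_graph)
  have closed_graph: "closed (range (map_prod f (id :: 'c \<Rightarrow> 'c)))"
    unfolding range_graph using f_closed by (rule closed_Times) simp
  note points = closed_embedding_image_Un_compl_iff[OF hom f_closed, where A = "mv_cont_points F"]
  note graphs = closed_embedding_image_Un_compl_iff[OF hom_graph closed_graph, where A = "mv_graph F"]
  \<comment> \<open>neither nonempty values nor completeness and separability are needed\<close>
  show ?thesis
    using mv_continuous_at_extend_iff[OF hom f_closed, of F] points graphs
    unfolding mv_cont_points_extend[OF hom f_closed] mv_graph_extend[OF \<open>inj f\<close>]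
    by (auto simp flip: Compl_eq_Diff_UNIV simp: mv_extend_def)
qed

end
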